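(* Let $n\ge 1$. (i) Let $p_0 > 1$ be such that $U(n,p_0) = 1$ (i.e. the identity matrix is optimal at $p_0$). Then for every $1 \le p < p_0$ we have $U(n,p)=1$, and every $n\times n$ real matrix $A$ whose rows are $\ell_p$-unit vectors and with $\mathrm{per}(A)=1$ has each row equal to $\pm$ a standard basis vector. (ii) Let $1\le p_0<\infty$ be such that $U(n,p_0) = n!/n^{n/p_0}$ (i.e. the matrix all of whose entries equal $n^{-1/p_0}$ is optimal at $p_0$). Then for every $p_0 < p < \infty$ we have $U(n,p) = n!/n^{n/p}$, and every $n\times n$ real matrix $A$ whose rows are $\ell_p$-unit vectors and with $\mathrm{per}(A) = n!/n^{n/p}$ has all entries of absolute value $n^{-1/p}$.
   Context: For $n\ge 1$ and $1 \le p \le \infty$, $U(n,p)$ denotes the maximum of $\mathrm{per}(A)=\sum_{\sigma\in S_n}\prod_{i=1}^n a_{i\sigma(i)}$ over all real $n\times n$ matrices $A$ each of whose rows has $\ell_p$-norm equal to $1$. *)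

theory Defs
  imports "HOL-Analysis.Analysis" "HOL-Library.Extended_Real" "HOL-Combinatorics.Permutations"
begin

text \<open>Rows/vectors of length n are functions nat => real, only indices < n matter.
  The exponent p ranges over [1, infinity], modelled as an extended real.\<close>

definition lpnorm :: "ereal \<Rightarrow> nat \<Rightarrow> (nat \<Rightarrow> real) \<Rightarrow> real" where
  "lpnorm p n x =
     (if p = \<infinity> then Max ((\<lambda>i. \<bar>x i\<bar>) ` {..<n})
      else (\<Sum>i<n. \<bar>x i\<bar> powr real_of_ereal p) powr (1 / real_of_ereal p))"

definition per :: "nat \<Rightarrow> (nat \<Rightarrow> nat \<Rightarrow> real) \<Rightarrow> real" where
  "per n A = (\<Sum>\<sigma> | \<sigma> permutes {..<n}. \<Prod>i<n. A i (\<sigma> i))"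

definition U :: "nat \<Rightarrow> ereal \<Rightarrow> real" where
  "U n p = Sup {per n A | A. \<forall>i<n. lpnorm p n (A i) = 1}"

end

theory Submission
  imports Defs
begin

(* Rescaling the rows of A to unit l_q-norm gives per A <= U(n,q) * prod_i |A_i|_q, so U(n,p) is
   controlled by U(n,q) and by the extreme values of |x|_q on the unit sphere of l_p.  For q > p
   one has |x|_q <= 1, with equality only at signed standard basis vectors; for q < p the power
   mean inequality gives |x|_q <= n^(1/q - 1/p), with equality only when every |x_k| is n^(-1/p).
   The identity and the constant matrix attain these bounds, and any matrix attaining them must
   have all its rows extremal. *)

lemma powr_gt_tangent:
  fixes r m y :: real
  assumes r: "r > 1" and m: "m > 0" and y: "y \<ge> 0" and "y \<noteq> m"
  shows "y powr r > m powr r + r * m powr (r - 1) * (y - m)"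
proof -
  have cont: "continuous_on {a..b} (\<lambda>x. x powr r)" if "0 \<le> a" for a b
    using that r by (intro continuous_on_powr') auto
  have deriv: "DERIV (\<lambda>x. x powr r) x :> l \<longleftrightarrow> l = r * x powr (r - 1)" if "x > 0" for x l
    using DERIV_unique has_real_derivative_powr[OF that] by blast
  have diff: "(\<lambda>x. x powr r) differentiable (at x)" if "x > 0" for x
    using deriv[OF that] real_differentiable_def by blast
  show ?thesis
  proof (cases "y < m")
    case True
    obtain l z where z: "y < z" "z < m" "DERIV (\<lambda>x. x powr r) z :> l"
      "m powr r - y powr r = (m - y) * l"
      using MVT[OF True cont[OF y]] diff y by force
    have "l = r * z powr (r - 1)"
      using deriv z y by auto
    have "z powr (r - 1) < m powr (r - 1)"
      using powr_less_mono2[of "r - 1" z m] r z y by auto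
    then have "m powr r - y powr r < (m - y) * (r * m powr (r - 1))"
      using z \<open>l = _\<close> True r by (simp add: mult_strict_left_mono)
    then show ?thesis by (simp add: algebra_simps)
  next
    case False
    with \<open>y \<noteq> m\<close> have "m < y" by auto
    obtain l z where z: "m < z" "z < y" "DERIV (\<lambda>x. x powr r) z :> l"
      "y powr r - m powr r = (y - m) * l"
      using MVT[OF \<open>m < y\<close> cont[of m y]] diff m by force
    have "l = r * z powr (r - 1)"
      using deriv z m by auto
    have "m powr (r - 1) < z powr (r - 1)"
      using powr_less_mono2[of "r - 1" m z] r z m by auto
    then have "(y - m) * (r * m powr (r - 1)) < y powr r - m powr r"
      using z \<open>l = _\<close> \<open>m < y\<close> r by (simp add: mult_strict_left_mono)
    then show ?thesis by (simp add: algebra_simps)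
  qed
qed

(* Sum the tangent-line inequality of t powr r at m = n powr (-1/r), the value all y k take
   in the equality case. *)
lemma sum_le_if_sum_powr_eq_1:
  fixes y :: "nat \<Rightarrow> real"
  assumes r: "r > 1" and y: "\<And>k. k < n \<Longrightarrow> y k \<ge> 0" and sum_powr: "(\<Sum>k<n. y k powr r) = 1"
  shows "(\<Sum>k<n. y k) \<le> real n powr (1 - 1 / r)"
    and "(\<Sum>k<n. y k) = real n powr (1 - 1 / r) \<Longrightarrow> \<forall>k<n. y k = real n powr (- 1 / r)"
proof -
  have n: "real n > 0"
    using sum_powr by (cases n) auto
  define m where "m = real n powr (- 1 / r)"
  define c where "c = r * m powr (r - 1)"
  define gap where "gap k = y k powr r - (m powr r + c * (y k - m))" for k
  have "m > 0" "c > 0"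
    using n r by (simp_all add: m_def c_def)
  have gap_nonneg: "gap k \<ge> 0" if "k < n" for k
    using powr_gt_tangent[OF r \<open>m > 0\<close> y[OF that]] by (cases "y k = m") (auto simp: gap_def c_def)
  have "m powr r = real n powr (- 1)"
    using r by (simp add: m_def powr_powr)
  then have "m powr r = 1 / real n"
    using n by (simp add: powr_minus_divide)
  then have sum_gap: "(\<Sum>k<n. gap k) = c * (real n * m - (\<Sum>k<n. y k))"
    using n sum_powr by (simp add: gap_def sum_subtractf sum.distrib sum_distrib_left algebra_simps)
  have nm: "real n * m = real n powr (1 - 1 / r)"
    using n by (simp add: m_def powr_diff powr_minus_divide)
  show "(\<Sum>k<n. y k) \<le> real n powr (1 - 1 / r)"
    using sum_nonneg[of "{..<n}" gap] gap_nonneg sum_gap \<open>c > 0\<close> nm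
    by (simp add: zero_le_mult_iff)
  assume "(\<Sum>k<n. y k) = real n powr (1 - 1 / r)"
  then have "(\<Sum>k<n. gap k) = 0"
    using sum_gap nm by simp
  then have "\<forall>k<n. gap k = 0"
    using gap_nonneg by (subst (asm) sum_nonneg_eq_0_iff) auto
  then show "\<forall>k<n. y k = m"
    using powr_gt_tangent[OF r \<open>m > 0\<close>] y by (fastforce simp: gap_def c_def)
qed

lemma lpnorm_ereal_eq_1_iff:
  assumes "p > 0"
  shows "lpnorm (ereal p) n x = 1 \<longleftrightarrow> (\<Sum>k<n. \<bar>x k\<bar> powr p) = 1"
proof -
  have "S powr (1 / p) = 1 \<longleftrightarrow> S = 1" if "S \<ge> 0" for S :: real
    using that assms by (cases "S = 0 \<or> S = 1") auto
  then show ?thesis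
    by (simp add: lpnorm_def sum_nonneg)
qed

lemma abs_le_lpnorm:
  assumes "q > 0" "j < n"
  shows "\<bar>x j\<bar> \<le> lpnorm q n x"
proof (cases q)
  case PInf
  then show ?thesis
    using assms(2) by (simp add: lpnorm_def)
next
  case (real r)
  with assms(1) have "r > 0" by simp
  have "\<bar>x j\<bar> powr r \<le> (\<Sum>k<n. \<bar>x k\<bar> powr r)"
    using assms(2) by (intro member_le_sum) auto
  then have "(\<bar>x j\<bar> powr r) powr (1 / r) \<le> (\<Sum>k<n. \<bar>x k\<bar> powr r) powr (1 / r)"
    using \<open>r > 0\<close> by (intro powr_mono2) auto
  then show ?thesis
    using real \<open>r > 0\<close> by (simp add: lpnorm_def powr_powr)
qed (use assms in simp)

lemma nonzero_entry_if_lpnorm_eq_1: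
  assumes "p > 0" "lpnorm (ereal p) n x = 1"
  obtains j where "j < n" "x j \<noteq> 0"
proof -
  have "\<exists>j<n. x j \<noteq> 0"
  proof (rule ccontr)
    assume "\<not> ?thesis"
    then have "lpnorm (ereal p) n x = 0"
      using assms(1) by (simp add: lpnorm_def)
    with assms(2) show False by simp
  qed
  then show ?thesis
    using that by blast
qed

lemma lpnorm_pos_if_lpnorm_eq_1:
  assumes "p > 0" "q > 0" "lpnorm (ereal p) n x = 1"
  shows "lpnorm q n x > 0"
proof -
  obtain j where "j < n" "x j \<noteq> 0"
    using nonzero_entry_if_lpnorm_eq_1[OF assms(1,3)] .
  then show ?thesis
    using abs_le_lpnorm[OF assms(2), of j n x] by linarith
qed

lemma lpnorm_mult:
  assumes "q > 0" "n \<ge> 1" "c \<ge> 0"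
  shows "lpnorm q n (\<lambda>k. c * x k) = c * lpnorm q n x"
proof (cases q)
  case PInf
  have "(\<lambda>k. \<bar>c * x k\<bar>) ` {..<n} = (\<lambda>t. c * t) ` (\<lambda>k. \<bar>x k\<bar>) ` {..<n}"
    using assms(3) by (auto simp: abs_mult)
  moreover have "Max ((\<lambda>t. c * t) ` (\<lambda>k. \<bar>x k\<bar>) ` {..<n}) = c * Max ((\<lambda>k. \<bar>x k\<bar>) ` {..<n})"
    using assms by (intro mono_Max_commute[symmetric]) (auto simp: mono_def mult_left_mono lessThan_empty_iff)
  ultimately show ?thesis
    using PInf by (simp add: lpnorm_def)
next
  case (real r)
  with assms(1) have "r > 0" by simp
  have "(\<Sum>k<n. \<bar>c * x k\<bar> powr r) = c powr r * (\<Sum>k<n. \<bar>x k\<bar> powr r)"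
    using assms(3) by (simp add: abs_mult powr_mult sum_distrib_left)
  then show ?thesis
    using real \<open>r > 0\<close> assms(3) by (simp add: lpnorm_def powr_mult powr_powr sum_nonneg)
qed (use assms in simp)

lemma signed_unit_vector_if_abs_eq_1:
  assumes "p > 0" "lpnorm (ereal p) n x = 1" "j < n" "\<bar>x j\<bar> = 1"
  shows "\<exists>j<n. \<exists>s\<in>{1, -1::real}. \<forall>k<n. x k = (if k = j then s else 0)"
proof -
  have "1 = (\<Sum>k<n. \<bar>x k\<bar> powr p)"
    using assms(1,2) lpnorm_ereal_eq_1_iff by simp
  also have "\<dots> = \<bar>x j\<bar> powr p + (\<Sum>k\<in>{..<n} - {j}. \<bar>x k\<bar> powr p)"
    using assms(3) by (intro sum.remove) auto
  finally have "(\<Sum>k\<in>{..<n} - {j}. \<bar>x k\<bar> powr p) = 0"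
    using assms(4) by simp
  then have "\<forall>k<n. k \<noteq> j \<longrightarrow> x k = 0"
    by (subst (asm) sum_nonneg_eq_0_iff) auto
  moreover have "x j \<in> {1, -1}"
    using assms(4) by (auto simp: abs_if split: if_splits)
  ultimately show ?thesis
    using assms(3) by (intro exI[of _ j] conjI bexI[of _ "x j"]) auto
qed

lemma lpnorm_infinity_attained:
  assumes "n > 0"
  obtains j where "j < n" "lpnorm \<infinity> n x = \<bar>x j\<bar>"
proof -
  have "Max ((\<lambda>k. \<bar>x k\<bar>) ` {..<n}) \<in> (\<lambda>k. \<bar>x k\<bar>) ` {..<n}"
    using assms by (intro Max_in) auto
  with that show ?thesis
    by (auto simp: lpnorm_def)
qed

lemma lpnorm_le_1_of_smaller_exponent:
  assumes p: "p > 0" "ereal p < q" and x: "lpnorm (ereal p) n x = 1"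
  shows "lpnorm q n x \<le> 1"
proof (cases q)
  case PInf
  obtain i where "i < n"
    using nonzero_entry_if_lpnorm_eq_1[OF p(1) x] .
  then obtain j where "j < n" "lpnorm q n x = \<bar>x j\<bar>"
    using lpnorm_infinity_attained[of n x] PInf by auto
  then show ?thesis
    using abs_le_lpnorm[of "ereal p" j n x] p x by simp
next
  case (real r)
  with p have "p < r" by simp
  have "(\<Sum>k<n. \<bar>x k\<bar> powr r) \<le> (\<Sum>k<n. \<bar>x k\<bar> powr p)"
    using abs_le_lpnorm[of "ereal p" _ n x] p x \<open>p < r\<close> by (intro sum_mono powr_mono') auto
  also have "\<dots> = 1"
    using p x lpnorm_ereal_eq_1_iff by blast
  finally show ?thesis
    using real p \<open>p < r\<close> by (simp add: lpnorm_def powr_le1 sum_nonneg)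
qed (use p in simp)

lemma abs_entry_eq_1_if_lpnorm_eq_1_of_smaller_exponent:
  assumes p: "p > 0" "ereal p < q" and x: "lpnorm (ereal p) n x = 1" "lpnorm q n x = 1"
  obtains j where "j < n" "\<bar>x j\<bar> = 1"
proof (cases q)
  case PInf
  obtain i where "i < n"
    using nonzero_entry_if_lpnorm_eq_1[OF p(1) x(1)] .
  then show ?thesis
    using lpnorm_infinity_attained[of n x] PInf x(2) that by auto
next
  case (real r)
  with p have "p < r" by simp
  have abs_le_1: "\<bar>x k\<bar> \<le> 1" if "k < n" for k
    using abs_le_lpnorm[of "ereal p" k n x] p that x(1) by simp
  have "(\<Sum>k<n. \<bar>x k\<bar> powr p) = 1" "(\<Sum>k<n. \<bar>x k\<bar> powr r) = 1"
    using p \<open>p < r\<close> x real lpnorm_ereal_eq_1_iff by simp_all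
  then have "(\<Sum>k<n. \<bar>x k\<bar> powr p - \<bar>x k\<bar> powr r) = 0"
    by (simp add: sum_subtractf)
  then have powr_eq: "\<bar>x k\<bar> powr r = \<bar>x k\<bar> powr p" if "k < n" for k
    using abs_le_1 that \<open>p < r\<close> by (subst (asm) sum_nonneg_eq_0_iff) (auto intro: powr_mono')
  obtain j where j: "j < n" "x j \<noteq> 0"
    using nonzero_entry_if_lpnorm_eq_1[OF p(1) x(1)] .
  have "\<not> \<bar>x j\<bar> < 1"
    using powr_less_mono'[of "\<bar>x j\<bar>" p r] powr_eq[OF j(1)] \<open>p < r\<close> j(2) by auto
  with abs_le_1[OF j(1)] have "\<bar>x j\<bar> = 1"
    by simp
  with j(1) show ?thesis
    using that by blast
qed (use p in simp)

lemma lpnorm_le_of_larger_exponent: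
  assumes p: "0 < p0" "p0 < p" and x: "lpnorm (ereal p) n x = 1"
  shows "lpnorm (ereal p0) n x \<le> real n powr (1 / p0 - 1 / p)"
    and "lpnorm (ereal p0) n x = real n powr (1 / p0 - 1 / p) \<Longrightarrow>
      \<forall>k<n. \<bar>x k\<bar> = real n powr (- 1 / p)"
proof -
  define r where "r = p / p0"
  define y where "y k = \<bar>x k\<bar> powr p0" for k
  have "r > 1"
    using p by (simp add: r_def)
  have "(\<Sum>k<n. y k powr r) = 1"
    using p x lpnorm_ereal_eq_1_iff by (simp add: y_def r_def powr_powr)
  note sum_y = sum_le_if_sum_powr_eq_1[OF \<open>r > 1\<close> _ this]
  have norm_p0: "lpnorm (ereal p0) n x = (\<Sum>k<n. y k) powr (1 / p0)"
    by (simp add: lpnorm_def y_def)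
  have bound: "(real n powr (1 - 1 / r)) powr (1 / p0) = real n powr (1 / p0 - 1 / p)"
    using p by (simp add: powr_powr r_def diff_divide_distrib)
  show "lpnorm (ereal p0) n x \<le> real n powr (1 / p0 - 1 / p)"
    unfolding norm_p0 bound[symmetric] using sum_y(1) p
    by (intro powr_mono2) (auto simp: y_def sum_nonneg)
  assume "lpnorm (ereal p0) n x = real n powr (1 / p0 - 1 / p)"
  then have "((\<Sum>k<n. y k) powr (1 / p0)) powr p0 = ((real n powr (1 - 1 / r)) powr (1 / p0)) powr p0"
    unfolding norm_p0 bound by simp
  then have "(\<Sum>k<n. y k) = real n powr (1 - 1 / r)"
    using p by (simp add: powr_powr y_def sum_nonneg)
  then have "y k = real n powr (- 1 / r)" if "k < n" for k
    using sum_y(2) that by (simp add: y_def)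
  moreover have "\<bar>x k\<bar> = y k powr (1 / p0)" for k
    using p by (simp add: y_def powr_powr)
  moreover have "(real n powr (- 1 / r)) powr (1 / p0) = real n powr (- 1 / p)"
    using p by (simp add: powr_powr r_def)
  ultimately show "\<forall>k<n. \<bar>x k\<bar> = real n powr (- 1 / p)"
    by simp
qed

lemma lpnorm_unit_vector:
  assumes "q > 0" "i < n"
  shows "lpnorm q n (\<lambda>k. if i = k then 1 else 0) = 1"
proof (cases q)
  case PInf
  have "(MAX k\<in>{..<n}. \<bar>if i = k then 1 else 0 :: real\<bar>) = 1"
    using assms(2) by (intro Max_eqI) auto
  then show ?thesis
    using PInf by (simp add: lpnorm_def)
next
  case (real r)
  with assms(1) have "r > 0" by simp
  have "(\<Sum>k<n. \<bar>if i = k then 1 else 0 :: real\<bar> powr r) = (\<Sum>k<n. if i = k then 1 else 0)"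
    by (intro sum.cong) auto
  also have "\<dots> = 1"
    using assms(2) by simp
  finally show ?thesis
    unfolding real using lpnorm_ereal_eq_1_iff[OF \<open>r > 0\<close>] by blast
qed (use assms in simp)

lemma lpnorm_const:
  assumes "p > 0" "n \<ge> 1"
  shows "lpnorm (ereal p) n (\<lambda>k. real n powr (- 1 / p)) = 1"
proof -
  have "(\<Sum>k<n. \<bar>real n powr (- 1 / p)\<bar> powr p) = real n * real n powr (- 1)"
    using assms by (simp add: powr_powr)
  also have "\<dots> = 1"
    using assms by (simp add: powr_minus)
  finally show ?thesis
    using assms lpnorm_ereal_eq_1_iff by blast
qed

lemma per_scale_rows: "per n (\<lambda>i k. c i * A i k) = (\<Prod>i<n. c i) * per n A"
  unfolding per_def by (simp add: prod.distrib sum_distrib_left)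

lemma per_le_fact:
  assumes "\<And>i j. i < n \<Longrightarrow> j < n \<Longrightarrow> \<bar>A i j\<bar> \<le> 1"
  shows "per n A \<le> fact n"
proof -
  have term_le_1: "(\<Prod>i<n. A i (\<sigma> i)) \<le> 1" if "\<sigma> permutes {..<n}" for \<sigma>
  proof -
    have "(\<Prod>i<n. A i (\<sigma> i)) \<le> (\<Prod>i<n. \<bar>A i (\<sigma> i)\<bar>)"
      by (simp add: abs_prod[symmetric])
    also have "\<dots> \<le> 1"
      using assms permutes_in_image[OF that] by (intro prod_le_1) auto
    finally show ?thesis .
  qed
  have "per n A \<le> (\<Sum>\<sigma> | \<sigma> permutes {..<n}. 1)"
    unfolding per_def by (rule sum_mono) (simp add: term_le_1)
  also have "\<dots> = fact n"
    by (simp add: card_permutations)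
  finally show ?thesis .
qed

lemma per_identity: "per n (\<lambda>i k. if i = k then 1 else 0) = 1"
proof -
  have diagonal: "(\<Prod>i<n. if i = \<sigma> i then 1 else 0 :: real) = (if \<sigma> = id then 1 else 0)"
    if "\<sigma> permutes {..<n}" for \<sigma>
  proof -
    have "\<sigma> = id \<longleftrightarrow> (\<forall>i<n. \<sigma> i = i)"
      using permutes_not_in[OF that] by (auto simp: fun_eq_iff)
    then show ?thesis
      by (auto simp: prod_zero)
  qed
  have "per n (\<lambda>i k. if i = k then 1 else 0) = (\<Sum>\<sigma> | \<sigma> permutes {..<n}. if \<sigma> = id then 1 else 0)"
    unfolding per_def by (intro sum.cong) (auto simp: diagonal)
  also have "\<dots> = 1"
    by (subst sum.delta) (auto simp: finite_permutations)
  finally show ?thesis .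
qed

lemma per_const: "per n (\<lambda>i k. a) = fact n * a ^ n"
  by (simp add: per_def card_permutations)

lemma bdd_above_per_unit_rows:
  assumes "q > 0"
  shows "bdd_above {per n A | A. \<forall>i<n. lpnorm q n (A i) = 1}"
proof (rule bdd_aboveI)
  fix x assume "x \<in> {per n A | A. \<forall>i<n. lpnorm q n (A i) = 1}"
  then obtain A where A: "x = per n A" "\<forall>i<n. lpnorm q n (A i) = 1"
    by blast
  have "\<bar>A i j\<bar> \<le> 1" if "i < n" "j < n" for i j
    using abs_le_lpnorm[OF assms that(2), of "A i"] A(2) that(1) by simp
  then show "x \<le> fact n"
    using per_le_fact A(1) by blast
qed

lemma per_le_U:
  assumes "q > 0" "\<forall>i<n. lpnorm q n (A i) = 1"
  shows "per n A \<le> U n q"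
  unfolding U_def using assms by (intro cSup_upper bdd_above_per_unit_rows) auto

lemma U_eqI:
  assumes "\<forall>i<n. lpnorm q n (B i) = 1"
    and "\<And>A. \<forall>i<n. lpnorm q n (A i) = 1 \<Longrightarrow> per n A \<le> per n B"
  shows "U n q = per n B"
  unfolding U_def using assms by (intro cSup_eq_maximum) auto

lemma one_le_U:
  assumes "q > 0"
  shows "1 \<le> U n q"
  using per_le_U[OF assms, of n "\<lambda>i k. if i = k then 1 else 0"]
  by (simp add: lpnorm_unit_vector[OF assms] per_identity)

lemma per_le_U_mult_prod_lpnorm:
  assumes "q > 0" "n \<ge> 1" and pos: "\<forall>i<n. lpnorm q n (A i) > 0"
  shows "per n A \<le> U n q * (\<Prod>i<n. lpnorm q n (A i))"
proof -
  define c where "c i = lpnorm q n (A i)" for i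
  define B where "B i = (\<lambda>k. A i k / c i)" for i
  have "per n A = per n (\<lambda>i k. c i * B i k)"
    unfolding per_def B_def using pos c_def by (intro sum.cong prod.cong) auto
  also have "\<dots> = (\<Prod>i<n. c i) * per n B"
    by (rule per_scale_rows)
  also have "\<dots> \<le> (\<Prod>i<n. c i) * U n q"
  proof (intro mult_left_mono per_le_U[OF assms(1)] allI impI)
    fix i assume "i < n"
    with pos have "c i > 0"
      by (simp add: c_def)
    have "lpnorm q n (B i) = 1 / c i * c i"
      using lpnorm_mult[OF assms(1,2), of "1 / c i" "A i"] \<open>c i > 0\<close> by (simp add: B_def c_def)
    with \<open>c i > 0\<close> show "lpnorm q n (B i) = 1"
      by simp
  qed (use pos in \<open>auto simp: c_def intro: prod_nonneg less_imp_le\<close>)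
  finally show ?thesis
    by (simp add: c_def mult.commute)
qed

lemma per_le_U_mult_power:
  assumes "q > 0" "n \<ge> 1" and rows: "\<forall>i<n. 0 < lpnorm q n (A i) \<and> lpnorm q n (A i) \<le> m"
  shows "per n A \<le> U n q * m ^ n"
    and "per n A = U n q * m ^ n \<Longrightarrow> \<forall>i<n. lpnorm q n (A i) = m"
proof -
  have U_pos: "U n q > 0"
    using one_le_U[OF assms(1), of n] by simp
  have bound: "per n A \<le> U n q * (\<Prod>i<n. lpnorm q n (A i))"
    using per_le_U_mult_prod_lpnorm[OF assms(1,2)] rows by blast
  have "(\<Prod>i<n. lpnorm q n (A i)) \<le> (\<Prod>i<n. m)"
    using rows by (intro prod_mono) (auto intro: less_imp_le)
  then have "U n q * (\<Prod>i<n. lpnorm q n (A i)) \<le> U n q * m ^ n"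
    using U_pos by (intro mult_left_mono) auto
  with bound show "per n A \<le> U n q * m ^ n"
    by linarith
  assume "per n A = U n q * m ^ n"
  then have prod_ge: "(\<Prod>i<n. m) \<le> (\<Prod>i<n. lpnorm q n (A i))"
    using bound U_pos by simp
  show "\<forall>i<n. lpnorm q n (A i) = m"
  proof (rule ccontr)
    assume "\<not> ?thesis"
    then obtain j where "j < n" "lpnorm q n (A j) < m"
      using rows by force
    then have "(\<Prod>i<n. lpnorm q n (A i)) < (\<Prod>i<n. m)"
      using rows by (intro prod_mono_strict[of j]) (auto intro: less_imp_le)
    with prod_ge show False by simp
  qed
qed

lemma identity_optimal_below:
  assumes "n \<ge> 1" "0 < p" "ereal p < q" "U n q = 1"
  shows "U n (ereal p) = 1"
    and "\<forall>i<n. lpnorm (ereal p) n (A i) = 1 \<Longrightarrow> per n A = 1 \<Longrightarrow>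
      \<forall>i<n. \<exists>j<n. \<exists>s\<in>{1, -1::real}. \<forall>k<n. A i k = (if k = j then s else 0)"
proof -
  have "q > 0"
    using assms(2,3) by (metis ereal_less(2) order.strict_trans)
  have rows: "\<forall>i<n. 0 < lpnorm q n (A i) \<and> lpnorm q n (A i) \<le> 1"
    if "\<forall>i<n. lpnorm (ereal p) n (A i) = 1" for A
    using that lpnorm_pos_if_lpnorm_eq_1[OF assms(2) \<open>q > 0\<close>]
      lpnorm_le_1_of_smaller_exponent[OF assms(2,3)] by blast
  show "U n (ereal p) = 1"
  proof -
    have "U n (ereal p) = per n (\<lambda>i k. if i = k then 1 else 0)"
    proof (rule U_eqI)
      fix A assume "\<forall>i<n. lpnorm (ereal p) n (A i) = 1"
      then show "per n A \<le> per n (\<lambda>i k. if i = k then 1 else 0)"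
        using per_le_U_mult_power(1)[OF \<open>q > 0\<close> assms(1) rows] assms(4) per_identity by simp
    qed (use assms(2) lpnorm_unit_vector in simp)
    then show ?thesis
      by (simp add: per_identity)
  qed
  assume A: "\<forall>i<n. lpnorm (ereal p) n (A i) = 1" and "per n A = 1"
  then have A_q: "\<forall>i<n. lpnorm q n (A i) = 1"
    using per_le_U_mult_power(2)[OF \<open>q > 0\<close> assms(1) rows[OF A]] assms(4) by simp
  show "\<forall>i<n. \<exists>j<n. \<exists>s\<in>{1, -1::real}. \<forall>k<n. A i k = (if k = j then s else 0)"
  proof (intro allI impI)
    fix i assume "i < n"
    then obtain j where "j < n" "\<bar>A i j\<bar> = 1"
      using abs_entry_eq_1_if_lpnorm_eq_1_of_smaller_exponent[OF assms(2,3)] A A_q by blast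
    then show "\<exists>j<n. \<exists>s\<in>{1, -1::real}. \<forall>k<n. A i k = (if k = j then s else 0)"
      using signed_unit_vector_if_abs_eq_1[OF assms(2)] A \<open>i < n\<close> by blast
  qed
qed

lemma constant_optimal_above:
  assumes "n \<ge> 1" "0 < p0" "p0 < p" "U n (ereal p0) = fact n / real n powr (real n / p0)"
  shows "U n (ereal p) = fact n / real n powr (real n / p)"
    and "\<forall>i<n. lpnorm (ereal p) n (A i) = 1 \<Longrightarrow> per n A = fact n / real n powr (real n / p) \<Longrightarrow>
      \<forall>i<n. \<forall>j<n. \<bar>A i j\<bar> = real n powr (- 1 / p)"
proof -
  define m where "m = real n powr (1 / p0 - 1 / p)"
  have "ereal p0 > 0" "0 < p"
    using assms(2,3) by simp_all
  have "m ^ n = real n powr (real n * (1 / p0 - 1 / p))"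
    using assms(1) unfolding m_def by (intro powr_power) simp
  also have "\<dots> = real n powr (real n / p0) / real n powr (real n / p)"
    by (simp add: right_diff_distrib powr_diff)
  finally have U_m: "U n (ereal p0) * m ^ n = fact n / real n powr (real n / p)"
    using assms(1,4) by simp
  have rows: "\<forall>i<n. 0 < lpnorm (ereal p0) n (A i) \<and> lpnorm (ereal p0) n (A i) \<le> m"
    if "\<forall>i<n. lpnorm (ereal p) n (A i) = 1" for A
  proof (intro allI impI conjI)
    fix i assume "i < n"
    with that have "lpnorm (ereal p) n (A i) = 1"
      by blast
    then show "0 < lpnorm (ereal p0) n (A i)" "lpnorm (ereal p0) n (A i) \<le> m"
      using lpnorm_pos_if_lpnorm_eq_1[OF \<open>0 < p\<close> \<open>ereal p0 > 0\<close>]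
        lpnorm_le_of_larger_exponent(1)[OF assms(2,3)] unfolding m_def by auto
  qed
  have "(real n powr (- 1 / p)) ^ n = real n powr (real n * (- 1 / p))"
    using assms(1) by (intro powr_power) simp
  also have "\<dots> = inverse (real n powr (real n / p))"
    by (simp add: powr_minus[symmetric])
  finally have per_const_row: "per n (\<lambda>i k. real n powr (- 1 / p)) = fact n / real n powr (real n / p)"
    by (simp add: per_const divide_inverse)
  have "U n (ereal p) = per n (\<lambda>i k. real n powr (- 1 / p))"
  proof (rule U_eqI)
    fix A assume "\<forall>i<n. lpnorm (ereal p) n (A i) = 1"
    then show "per n A \<le> per n (\<lambda>i k. real n powr (- 1 / p))"
      using per_le_U_mult_power(1)[OF \<open>ereal p0 > 0\<close> assms(1) rows] U_m per_const_row by simp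
  qed (use assms lpnorm_const in simp)
  then show "U n (ereal p) = fact n / real n powr (real n / p)"
    using per_const_row by simp
  assume A: "\<forall>i<n. lpnorm (ereal p) n (A i) = 1" and "per n A = fact n / real n powr (real n / p)"
  then have "\<forall>i<n. lpnorm (ereal p0) n (A i) = m"
    using per_le_U_mult_power(2)[OF \<open>ereal p0 > 0\<close> assms(1) rows[OF A]] U_m by simp
  then show "\<forall>i<n. \<forall>j<n. \<bar>A i j\<bar> = real n powr (- 1 / p)"
    using lpnorm_le_of_larger_exponent(2)[OF assms(2,3)] A unfolding m_def by blast
qed

theorem lemma1p2:
  fixes n :: nat
  assumes "n \<ge> 1"
  shows
   "(\<forall>p0::ereal. p0 > 1 \<and> U n p0 = 1 \<longrightarrow>
      (\<forall>p::real. 1 \<le> p \<and> ereal p < p0 \<longrightarrow>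
         U n (ereal p) = 1 \<and>
         (\<forall>A. (\<forall>i<n. lpnorm (ereal p) n (A i) = 1) \<and> per n A = 1 \<longrightarrow>
              (\<forall>i<n. \<exists>j<n. \<exists>s\<in>{1, -1::real}. \<forall>k<n. A i k = (if k = j then s else 0)))))
    \<and>
    (\<forall>p0::real. 1 \<le> p0 \<and> U n (ereal p0) = fact n / real n powr (real n / p0) \<longrightarrow>
      (\<forall>p::real. p0 < p \<longrightarrow>
         U n (ereal p) = fact n / real n powr (real n / p) \<and>
         (\<forall>A. (\<forall>i<n. lpnorm (ereal p) n (A i) = 1) \<and> per n A = fact n / real n powr (real n / p) \<longrightarrow>
              (\<forall>i<n. \<forall>j<n. \<bar>A i j\<bar> = real n powr (- 1 / p)))))"
proof (rule conjI; intro allI impI; elim conjE)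
  fix p0 :: ereal and p :: real
  assume "1 < p0" "U n p0 = 1" "1 \<le> p" "ereal p < p0"
  then have "0 < p" by simp
  from identity_optimal_below[OF assms this \<open>ereal p < p0\<close> \<open>U n p0 = 1\<close>]
  show "U n (ereal p) = 1 \<and> (\<forall>A. (\<forall>i<n. lpnorm (ereal p) n (A i) = 1) \<and> per n A = 1 \<longrightarrow>
      (\<forall>i<n. \<exists>j<n. \<exists>s\<in>{1, -1::real}. \<forall>k<n. A i k = (if k = j then s else 0)))"
    by blast
next
  fix p0 p :: real
  assume "1 \<le> p0" "U n (ereal p0) = fact n / real n powr (real n / p0)" "p0 < p"
  then have "0 < p0" by simp
  from constant_optimal_above[OF assms this \<open>p0 < p\<close> \<open>U n (ereal p0) = _\<close>]
  show "U n (ereal p) = fact n / real n powr (real n / p) \<and>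
      (\<forall>A. (\<forall>i<n. lpnorm (ereal p) n (A i) = 1) \<and> per n A = fact n / real n powr (real n / p) \<longrightarrow>
        (\<forall>i<n. \<forall>j<n. \<bar>A i j\<bar> = real n powr (- 1 / p)))"
    by blast
qed

end
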